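(* Let $G$ be a weakly-reversible chemical reaction network in $s$ species and $\mathbf{k}$ a field of characteristic zero. If $G$ is atomic, then the ideal $(\mathcal{E}_G)\subseteq\mathbf{k}[x_1,\dots,x_s]$ is prime.
   Context: A chemical reaction network (CRN) consists of positive integers $s,n$, a finite directed graph $G$ with vertex set $\{1,\dots,n\}$ and edge set $E(G)$, and an injective labeling of vertex $i$ by a monic monomial $\psi_i=\prod_{j=1}^s x_j^{y_{ij}}$. $G$ is weakly-reversible iff each connected component is strongly connected. The associated event-system $\mathcal{E}_G$ is the set of binomials $\psi_i-\psi_j$, one for each pair $\{i,j\}$ with $(i,j)\in E(G)$ or $(j,i)\in E(G)$, and $(\mathcal{E}_G)$ is the ideal it generates. The event-graph $\overline{G}$ has as vertices all monic monomials in $x_1,\dots,x_s$ (including $1$), with an edge $(N\psi_i,N\psi_j)$ for each $(i,j)\in E(G)$ and each monic monomial $N$. The atoms of $G$ are the variables $x_i$ that are isolated vertices of $\overline{G}$. An atomic monomial is a monic monomial all of whose variables are atoms. $G$ is atomic iff every connected component of $\overline{G}$ contains exactly one atomic monomial. *)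

theory Defs
  imports Main "HOL-Library.Poly_Mapping"
begin

text \<open>Monomials in variables x_0,...,x_(s-1) are exponent vectors  nat =>0 nat  with
 Poly_Mapping.keys among {..<s}; multiplication of monomials is addition of exponent vectors.
 Polynomials over k are  (nat =>0 nat) =>0 k (the convolution ring structure of Poly_Mapping).\<close>

type_synonym monom = "nat \<Rightarrow>\<^sub>0 nat"
type_synonym 'k mpoly = "monom \<Rightarrow>\<^sub>0 'k"

definition monomials :: "nat \<Rightarrow> monom set" where
  "monomials s = {m. Poly_Mapping.keys m \<subseteq> {..<s}}"

definition polys :: "nat \<Rightarrow> ('k::comm_ring_1) mpoly set" where
  "polys s = {p. \<forall>m\<in>Poly_Mapping.keys p. Poly_Mapping.keys m \<subseteq> {..<s}}"

definition mono_poly :: "monom \<Rightarrow> ('k::comm_ring_1) mpoly" where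
  "mono_poly m = Poly_Mapping.single m 1"

definition var :: "nat \<Rightarrow> monom" where
  "var i = Poly_Mapping.single i 1"

definition is_ideal_in :: "'a::comm_ring_1 set \<Rightarrow> 'a set \<Rightarrow> bool" where
  "is_ideal_in R I \<longleftrightarrow> I \<subseteq> R \<and> 0 \<in> I \<and> (\<forall>a\<in>I. \<forall>b\<in>I. a + b \<in> I)
      \<and> (\<forall>r\<in>R. \<forall>a\<in>I. r * a \<in> I)"

definition ideal_gen_in :: "'a::comm_ring_1 set \<Rightarrow> 'a set \<Rightarrow> 'a set" where
  "ideal_gen_in R S = \<Inter>{I. is_ideal_in R I \<and> S \<subseteq> I}"

definition prime_ideal_in :: "'a::comm_ring_1 set \<Rightarrow> 'a set \<Rightarrow> bool" where
  "prime_ideal_in R I \<longleftrightarrow> is_ideal_in R I \<and> I \<noteq> R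
      \<and> (\<forall>a\<in>R. \<forall>b\<in>R. a * b \<in> I \<longrightarrow> a \<in> I \<or> b \<in> I)"

text \<open>A CRN: s species, vertices {0..<n}, edge set E, labels psi (monic monomials).\<close>
definition is_crn :: "nat \<Rightarrow> nat \<Rightarrow> (nat \<times> nat) set \<Rightarrow> (nat \<Rightarrow> monom) \<Rightarrow> bool" where
  "is_crn s n E psi \<longleftrightarrow> 0 < s \<and> 0 < n \<and> E \<subseteq> {..<n} \<times> {..<n}
      \<and> (\<forall>i<n. psi i \<in> monomials s) \<and> inj_on psi {..<n}"

definition weakly_reversible :: "nat \<Rightarrow> (nat \<times> nat) set \<Rightarrow> bool" where
  "weakly_reversible n E \<longleftrightarrow>
     (\<forall>i<n. \<forall>j<n. (i, j) \<in> (E \<union> E\<inverse>)\<^sup>* \<longrightarrow> (i, j) \<in> E\<^sup>*)"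

definition event_system :: "(nat \<times> nat) set \<Rightarrow> (nat \<Rightarrow> monom) \<Rightarrow> ('k::comm_ring_1) mpoly set" where
  "event_system E psi = {mono_poly (psi i) - mono_poly (psi j) | i j. (i, j) \<in> E}"

definition event_edges :: "nat \<Rightarrow> (nat \<times> nat) set \<Rightarrow> (nat \<Rightarrow> monom) \<Rightarrow> (monom \<times> monom) set" where
  "event_edges s E psi = {(N + psi i, N + psi j) | N i j. N \<in> monomials s \<and> (i, j) \<in> E}"

definition atoms :: "nat \<Rightarrow> (nat \<times> nat) set \<Rightarrow> (nat \<Rightarrow> monom) \<Rightarrow> nat set" where
  "atoms s E psi = {i. i < s \<and> (\<forall>(a, b)\<in>event_edges s E psi. a \<noteq> var i \<and> b \<noteq> var i)}"

definition atomic_monomial :: "nat \<Rightarrow> (nat \<times> nat) set \<Rightarrow> (nat \<Rightarrow> monom) \<Rightarrow> monom \<Rightarrow> bool" where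
  "atomic_monomial s E psi m \<longleftrightarrow> m \<in> monomials s \<and> Poly_Mapping.keys m \<subseteq> atoms s E psi"

definition is_atomic :: "nat \<Rightarrow> (nat \<times> nat) set \<Rightarrow> (nat \<Rightarrow> monom) \<Rightarrow> bool" where
  "is_atomic s E psi \<longleftrightarrow>
     (\<forall>m\<in>monomials s. \<exists>!a. atomic_monomial s E psi a \<and>
          (m, a) \<in> (event_edges s E psi \<union> (event_edges s E psi)\<inverse>)\<^sup>*)"

end

theory Submission
  imports Defs
begin

text \<open>Every monomial m is linked in the event graph to a unique atomic monomial rep(m), and
  since the event graph is invariant under multiplication by monomials, rep is multiplicative.
  Hence m \<mapsto> rep(m) extends linearly to a ring endomorphism of the polynomial ring, which is
  a domain, so its kernel is prime. The kernel contains every event binomial, and conversely it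
  is spanned by the differences m - rep(m), each of which telescopes along a path of the event
  graph into multiples of event binomials. So the kernel is the event ideal.\<close>

definition push_keys :: "('a \<Rightarrow> 'b) \<Rightarrow> ('a \<Rightarrow>\<^sub>0 'c::comm_monoid_add) \<Rightarrow> 'b \<Rightarrow>\<^sub>0 'c" where
  "push_keys r p = (\<Sum>m\<in>Poly_Mapping.keys p. Poly_Mapping.single (r m) (Poly_Mapping.lookup p m))"

lemma poly_mapping_sum_single:
  fixes p :: "'a \<Rightarrow>\<^sub>0 'b::comm_monoid_add"
  shows "p = (\<Sum>m\<in>Poly_Mapping.keys p. Poly_Mapping.single m (Poly_Mapping.lookup p m))"
proof (rule poly_mapping_eqI)
  fix k
  have "Poly_Mapping.lookup (\<Sum>m\<in>Poly_Mapping.keys p. Poly_Mapping.single m (Poly_Mapping.lookup p m)) k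
      = (\<Sum>m\<in>Poly_Mapping.keys p. Poly_Mapping.lookup p m when m = k)"
    by (simp add: lookup_sum lookup_single)
  also have "\<dots> = Poly_Mapping.lookup p k"
    by (cases "k \<in> Poly_Mapping.keys p") (auto simp: in_keys_iff when_def)
  finally show "Poly_Mapping.lookup p k
      = Poly_Mapping.lookup (\<Sum>m\<in>Poly_Mapping.keys p. Poly_Mapping.single m (Poly_Mapping.lookup p m)) k"
    by simp
qed

lemma poly_mapping_induct [consumes 1, case_names zero single add]:
  fixes p :: "'a \<Rightarrow>\<^sub>0 'b::comm_monoid_add"
  assumes "Poly_Mapping.keys p \<subseteq> S"
    and "P 0"
    and "\<And>x c. x \<in> S \<Longrightarrow> P (Poly_Mapping.single x c)"
    and "\<And>a b. P a \<Longrightarrow> P b \<Longrightarrow> P (a + b)"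
  shows "P p"
proof -
  have "P (\<Sum>m\<in>A. Poly_Mapping.single m (Poly_Mapping.lookup p m))" if "finite A" "A \<subseteq> S" for A
    using that by (induction A rule: finite_induct) (auto intro: assms)
  from this[of "Poly_Mapping.keys p"] show ?thesis
    using assms(1) poly_mapping_sum_single[of p] by simp
qed

lemma push_keys_superset:
  assumes "finite A" "Poly_Mapping.keys p \<subseteq> A"
  shows "push_keys r p = (\<Sum>m\<in>A. Poly_Mapping.single (r m) (Poly_Mapping.lookup p m))"
  unfolding push_keys_def
  by (rule sum.mono_neutral_left) (use assms in \<open>auto simp: in_keys_iff\<close>)

lemma push_keys_zero [simp]: "push_keys r 0 = 0"
  by (simp add: push_keys_def)

lemma push_keys_single [simp]: "push_keys r (Poly_Mapping.single x c) = Poly_Mapping.single (r x) c"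
  by (simp add: push_keys_def)

lemma push_keys_add: "push_keys r (p + q) = push_keys r p + push_keys r q"
proof -
  let ?A = "Poly_Mapping.keys p \<union> Poly_Mapping.keys q"
  have "push_keys r (p + q)
      = (\<Sum>m\<in>?A. Poly_Mapping.single (r m) (Poly_Mapping.lookup (p + q) m))"
    by (rule push_keys_superset) (simp_all add: keys_add)
  also have "\<dots> = (\<Sum>m\<in>?A. Poly_Mapping.single (r m) (Poly_Mapping.lookup p m))
      + (\<Sum>m\<in>?A. Poly_Mapping.single (r m) (Poly_Mapping.lookup q m))"
    by (simp add: lookup_add single_add sum.distrib)
  also have "\<dots> = push_keys r p + push_keys r q"
    using push_keys_superset[of ?A p r] push_keys_superset[of ?A q r] by simp
  finally show ?thesis .
qed

lemma push_keys_diff: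
  fixes p q :: "'a \<Rightarrow>\<^sub>0 'c::ab_group_add"
  shows "push_keys r (p - q) = push_keys r p - push_keys r q"
  using push_keys_add[of r "p - q" q] by (simp add: eq_diff_eq)

lemma push_keys_mult:
  fixes p q :: "'a::monoid_add \<Rightarrow>\<^sub>0 'c::semiring_0"
  assumes additive: "\<And>a b. a \<in> S \<Longrightarrow> b \<in> S \<Longrightarrow> r (a + b) = r a + r b"
    and "Poly_Mapping.keys p \<subseteq> S" "Poly_Mapping.keys q \<subseteq> S"
  shows "push_keys r (p * q) = push_keys r p * push_keys r q"
  using assms(2)
proof (induction p rule: poly_mapping_induct)
  case (single x c)
  from assms(3) show ?case
  proof (induction q rule: poly_mapping_induct)
    case (single y d)
    then show ?case using additive[of x y] \<open>x \<in> S\<close> by (simp add: mult_single)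
  qed (simp_all add: distrib_left push_keys_add)
qed (simp_all add: distrib_right push_keys_add)

lemma ideal_gen_in_eqI:
  assumes "is_ideal_in R J" "S \<subseteq> J" "\<And>I. is_ideal_in R I \<Longrightarrow> S \<subseteq> I \<Longrightarrow> J \<subseteq> I"
  shows "ideal_gen_in R S = J"
  unfolding ideal_gen_in_def
  by (rule antisym; (rule Inter_lower Inter_greatest)?) (use assms in blast)+

lemma prime_ideal_in_kernel:
  fixes f :: "'a::comm_ring_1 \<Rightarrow> 'b::{comm_ring_1, ring_no_zero_divisors}"
  assumes closed: "0 \<in> R" "1 \<in> R" "\<And>a b. a \<in> R \<Longrightarrow> b \<in> R \<Longrightarrow> a + b \<in> R"
      "\<And>a b. a \<in> R \<Longrightarrow> b \<in> R \<Longrightarrow> a * b \<in> R"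
    and add: "\<And>a b. a \<in> R \<Longrightarrow> b \<in> R \<Longrightarrow> f (a + b) = f a + f b"
    and mult: "\<And>a b. a \<in> R \<Longrightarrow> b \<in> R \<Longrightarrow> f (a * b) = f a * f b"
    and "f 1 \<noteq> 0"
  shows "prime_ideal_in R {a \<in> R. f a = 0}"
proof -
  have "f 0 = 0" using add[of 0 0] closed(1) by simp
  then have "is_ideal_in R {a \<in> R. f a = 0}"
    unfolding is_ideal_in_def using closed add mult by auto
  moreover have "1 \<notin> {a \<in> R. f a = 0}" using \<open>f 1 \<noteq> 0\<close> by simp
  ultimately show ?thesis
    unfolding prime_ideal_in_def using closed(2) mult by auto
qed

lemma monomials_add: "a \<in> monomials s \<Longrightarrow> b \<in> monomials s \<Longrightarrow> a + b \<in> monomials s"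
  unfolding monomials_def using keys_add[of a b] by auto

lemma monomials_zero [simp]: "0 \<in> monomials s"
  by (simp add: monomials_def)

lemma polys_iff_keys: "p \<in> polys s \<longleftrightarrow> Poly_Mapping.keys p \<subseteq> monomials s"
  unfolding polys_def monomials_def by blast

lemma keys_polys: "p \<in> polys s \<Longrightarrow> Poly_Mapping.keys p \<subseteq> monomials s"
  by (simp add: polys_iff_keys)

lemma single_in_polys: "m \<in> monomials s \<Longrightarrow> Poly_Mapping.single m c \<in> polys s"
  unfolding polys_def monomials_def by simp

lemma zero_in_polys: "0 \<in> polys s"
  by (simp add: polys_def)

lemma one_in_polys: "1 \<in> polys s"
  using single_in_polys[OF monomials_zero] by (simp flip: single_one)

lemma polys_add: "p \<in> polys s \<Longrightarrow> q \<in> polys s \<Longrightarrow> p + q \<in> polys s"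
  unfolding polys_def using keys_add[of p q] by blast

lemma polys_mult:
  assumes "p \<in> polys s" "q \<in> polys s"
  shows "p * q \<in> polys s"
proof -
  have "Poly_Mapping.keys (p * q) \<subseteq> monomials s"
    using keys_mult[of p q] assms monomials_add by (fastforce simp: polys_iff_keys)
  then show ?thesis by (simp add: polys_iff_keys)
qed

lemma polys_diff: "p \<in> polys s \<Longrightarrow> q \<in> polys s \<Longrightarrow> p - q \<in> polys s"
  using polys_add[of p s "- q"] unfolding polys_def by simp

abbreviation event_connected :: "nat \<Rightarrow> (nat \<times> nat) set \<Rightarrow> (nat \<Rightarrow> monom) \<Rightarrow> (monom \<times> monom) set" where
  "event_connected s E psi \<equiv> (event_edges s E psi \<union> (event_edges s E psi)\<inverse>)\<^sup>*"

definition atomic_rep :: "nat \<Rightarrow> (nat \<times> nat) set \<Rightarrow> (nat \<Rightarrow> monom) \<Rightarrow> monom \<Rightarrow> monom" where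
  "atomic_rep s E psi m = (THE a. atomic_monomial s E psi a \<and> (m, a) \<in> event_connected s E psi)"

lemma atomic_rep:
  assumes "is_atomic s E psi" "m \<in> monomials s"
  shows "atomic_monomial s E psi (atomic_rep s E psi m)"
    and "(m, atomic_rep s E psi m) \<in> event_connected s E psi"
  using theI'[OF bspec[OF assms(1)[unfolded is_atomic_def] assms(2)]]
  unfolding atomic_rep_def by auto

lemma atomic_rep_eqI:
  assumes "is_atomic s E psi" "m \<in> monomials s"
    and "atomic_monomial s E psi a" "(m, a) \<in> event_connected s E psi"
  shows "atomic_rep s E psi m = a"
  unfolding atomic_rep_def
  by (rule the1_equality[OF bspec[OF assms(1)[unfolded is_atomic_def] assms(2)]]) (use assms in blast)

lemma event_edges_shift:
  assumes "(a, b) \<in> event_edges s E psi" "N \<in> monomials s"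
  shows "(N + a, N + b) \<in> event_edges s E psi"
proof -
  obtain M i j where "a = M + psi i" "b = M + psi j" "M \<in> monomials s" "(i, j) \<in> E"
    using assms(1) unfolding event_edges_def by blast
  moreover have "(N + a, N + b) = ((N + M) + psi i, (N + M) + psi j)"
    using \<open>a = M + psi i\<close> \<open>b = M + psi j\<close> by (simp add: add.assoc)
  moreover have "N + M \<in> monomials s" using assms(2) \<open>M \<in> monomials s\<close> by (rule monomials_add)
  ultimately show ?thesis
    unfolding event_edges_def using \<open>(i, j) \<in> E\<close> by blast
qed

lemma event_connected_shift:
  assumes "(a, b) \<in> event_connected s E psi" "N \<in> monomials s"
  shows "(N + a, N + b) \<in> event_connected s E psi"
  using assms(1)
proof (induction rule: rtrancl_induct)
  case (step y z)
  then have "(N + y, N + z) \<in> event_edges s E psi \<union> (event_edges s E psi)\<inverse>"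
    using event_edges_shift[OF _ assms(2)] by blast
  with step.IH show ?case by (rule rtrancl_into_rtrancl)
qed simp

lemma atomic_monomial_add:
  "atomic_monomial s E psi a \<Longrightarrow> atomic_monomial s E psi b \<Longrightarrow> atomic_monomial s E psi (a + b)"
  unfolding atomic_monomial_def using keys_add[of a b] monomials_add[of a s b] by blast

lemma atomic_rep_add:
  assumes atomic: "is_atomic s E psi" and "a \<in> monomials s" "b \<in> monomials s"
  shows "atomic_rep s E psi (a + b) = atomic_rep s E psi a + atomic_rep s E psi b"
proof (rule atomic_rep_eqI[OF atomic])
  let ?ra = "atomic_rep s E psi a" and ?rb = "atomic_rep s E psi b"
  note A = atomic_rep[OF atomic \<open>a \<in> monomials s\<close>] and B = atomic_rep[OF atomic \<open>b \<in> monomials s\<close>]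
  show "a + b \<in> monomials s" using assms by (simp add: monomials_add)
  show "atomic_monomial s E psi (?ra + ?rb)" using A(1) B(1) by (rule atomic_monomial_add)
  have "(a + b, ?ra + b) \<in> event_connected s E psi"
    using event_connected_shift[OF A(2) \<open>b \<in> monomials s\<close>] by (simp add: add.commute)
  moreover have "(?ra + b, ?ra + ?rb) \<in> event_connected s E psi"
    using event_connected_shift[OF B(2)] A(1) unfolding atomic_monomial_def by blast
  ultimately show "(a + b, ?ra + ?rb) \<in> event_connected s E psi"
    by (rule rtrancl_trans)
qed

lemma event_binomial_in_ideal:
  assumes I: "is_ideal_in (polys s) I" and gens: "event_system E psi \<subseteq> I"
    and "(a, b) \<in> event_connected s E psi"
  shows "Poly_Mapping.single a c - Poly_Mapping.single b (c::'k::comm_ring_1) \<in> I"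
proof -
  have I_add: "x + y \<in> I" if "x \<in> I" "y \<in> I" for x y
    using I that unfolding is_ideal_in_def by blast
  have I_mult: "r * x \<in> I" if "r \<in> polys s" "x \<in> I" for r x
    using I that unfolding is_ideal_in_def by blast
  have edge: "Poly_Mapping.single u c - Poly_Mapping.single v c \<in> I"
    if uv_edge: "(u, v) \<in> event_edges s E psi" for u v c
  proof -
    obtain N i j where uv: "u = N + psi i" "v = N + psi j" "N \<in> monomials s" "(i, j) \<in> E"
      using uv_edge unfolding event_edges_def by blast
    have "mono_poly (psi i) - mono_poly (psi j) \<in> I"
      using gens uv(4) unfolding event_system_def by blast
    from I_mult[OF single_in_polys[OF uv(3), of c] this] show ?thesis
      by (simp add: uv mono_poly_def right_diff_distrib mult_single)
  qed
  have edge_sym: "Poly_Mapping.single u c - Poly_Mapping.single v c \<in> I"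
    if "(u, v) \<in> event_edges s E psi \<union> (event_edges s E psi)\<inverse>" for u v c
    using that edge[of u v c] edge[of v u "- c"] by (auto simp: single_uminus)
  from assms(3) show ?thesis
  proof (induction rule: rtrancl_induct)
    case base
    then show ?case using I unfolding is_ideal_in_def by simp
  next
    case (step y z)
    from I_add[OF step.IH edge_sym[OF step.hyps(2), of c]] show ?case
      by simp
  qed
qed

lemma kernel_atomic_rep_subset_ideal:
  assumes atomic: "is_atomic s E psi"
    and I: "is_ideal_in (polys s) I" and gens: "event_system E psi \<subseteq> I"
  shows "{p \<in> polys s. push_keys (atomic_rep s E psi) p = 0} \<subseteq> (I :: 'k::comm_ring_1 mpoly set)"
proof safe
  fix p :: "'k mpoly"
  assume p: "p \<in> polys s" and kernel: "push_keys (atomic_rep s E psi) p = 0"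
  let ?d = "\<lambda>m. Poly_Mapping.single m (Poly_Mapping.lookup p m)
    - Poly_Mapping.single (atomic_rep s E psi m) (Poly_Mapping.lookup p m)"
  have sum_in_I: "sum ?d A \<in> I" if "finite A" "A \<subseteq> monomials s" for A
    using that
  proof (induction A rule: finite_induct)
    case empty
    then show ?case using I unfolding is_ideal_in_def by simp
  next
    case (insert m A)
    have "?d m \<in> I"
      using event_binomial_in_ideal[OF I gens atomic_rep(2)[OF atomic]] insert.prems by blast
    with insert show ?case using I unfolding is_ideal_in_def by simp
  qed
  have "p = p - push_keys (atomic_rep s E psi) p"
    using kernel by simp
  also have "\<dots> = sum ?d (Poly_Mapping.keys p)"
    by (subst (1) poly_mapping_sum_single) (simp add: push_keys_def sum_subtractf)
  finally show "p \<in> I"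
    using sum_in_I[OF finite_keys keys_polys[OF p]] by simp
qed

lemma event_system_in_kernel:
  assumes crn: "is_crn s n E psi" and atomic: "is_atomic s E psi"
  shows "event_system E psi \<subseteq> {p \<in> polys s. push_keys (atomic_rep s E psi) p = (0::'k::comm_ring_1 mpoly)}"
proof
  fix g :: "'k mpoly" assume "g \<in> event_system E psi"
  then obtain i j where g: "g = mono_poly (psi i) - mono_poly (psi j)" and "(i, j) \<in> E"
    unfolding event_system_def by blast
  then have psi: "psi i \<in> monomials s" "psi j \<in> monomials s"
    using crn unfolding is_crn_def by auto
  have "(0 + psi i, 0 + psi j) \<in> event_edges s E psi"
    unfolding event_edges_def using \<open>(i, j) \<in> E\<close> monomials_zero[of s] by blast
  then have "(psi i, psi j) \<in> event_edges s E psi" by simp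
  then have "(psi i, atomic_rep s E psi (psi j)) \<in> event_connected s E psi"
    using atomic_rep(2)[OF atomic psi(2)] by (meson UnI1 converse_rtrancl_into_rtrancl)
  then have "atomic_rep s E psi (psi i) = atomic_rep s E psi (psi j)"
    by (rule atomic_rep_eqI[OF atomic psi(1) atomic_rep(1)[OF atomic psi(2)]])
  then show "g \<in> {p \<in> polys s. push_keys (atomic_rep s E psi) p = 0}"
    using psi by (simp add: g mono_poly_def push_keys_diff polys_diff single_in_polys)
qed

theorem lemma5p4:
  fixes s n :: nat and E :: "(nat \<times> nat) set" and psi :: "nat \<Rightarrow> monom"
  assumes "is_crn s n E psi"
    and "weakly_reversible n E"
    and "is_atomic s E psi"
  shows "prime_ideal_in (polys s :: ('k::field_char_0) mpoly set)
           (ideal_gen_in (polys s) (event_system E psi))"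
proof -
  let ?f = "push_keys (atomic_rep s E psi) :: 'k mpoly \<Rightarrow> 'k mpoly"
  have mult: "?f (p * q) = ?f p * ?f q" if "p \<in> polys s" "q \<in> polys s" for p q
    by (intro push_keys_mult[of "monomials s" "atomic_rep s E psi"] atomic_rep_add[OF assms(3)]
        keys_polys that)
  have "?f 1 \<noteq> 0"
    by (simp flip: single_one) (metis lookup_single_eq lookup_zero one_neq_zero)
  then have prime: "prime_ideal_in (polys s) {p \<in> polys s. ?f p = 0}"
    by (rule prime_ideal_in_kernel[rotated -1])
      (simp_all add: zero_in_polys one_in_polys polys_add polys_mult push_keys_add mult)
  then have "ideal_gen_in (polys s) (event_system E psi) = {p \<in> polys s. ?f p = 0}"
    by (intro ideal_gen_in_eqI event_system_in_kernel[OF assms(1,3)]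
        kernel_atomic_rep_subset_ideal[OF assms(3)]) (auto simp: prime_ideal_in_def)
  with prime show ?thesis by simp
qed

end
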